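(* Let $\mathcal{T}$ be a finite or countably infinite set, let $\prec$ be a strict total order on $\mathcal{T}$, and let $\mathbf{p}, \mathbf{q}$ be probability distributions on $\mathcal{T}$. Let $\lhd$ denote the lexicographic order on $\mathcal{T} \times [0,1]$ induced by $(\mathcal{T},\prec)$ and $([0,1],<)$. Suppose that $\Pr[(X,U_1) \lhd (Y,U_0)] \ne 1/2$, where $Y \sim \mathbf{q}$, $X \sim \mathbf{p}$, and $U_0,U_1 \sim^{\mathrm{iid}} \mathrm{Uniform}(0,1)$ are mutually independent. For each positive integer $m$, let $X_0 \sim \mathbf{q}$, $X_1,\dots,X_m \sim^{\mathrm{iid}} \mathbf{p}$, $U_0,\dots,U_m \sim^{\mathrm{iid}} \mathrm{Uniform}(0,1)$ be mutually independent, and let $R = \sum_{j=1}^m \big(\mathbb{I}[X_j \prec X_0] + \mathbb{I}[X_j = X_0, U_j < U_0]\big)$. Then for all $m \ge 1$, $R$ is not uniformly distributed on $\{0,1,\dots,m\}$.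
   Context: The lexicographic order: $(x,u) \lhd (y,v)$ iff $x \prec y$, or $x = y$ and $u < v$. $\mathbb{I}[\cdot]$ denotes the indicator of an event. *)

theory Defs
  imports "HOL-Probability.Probability"
begin

definition lex_less :: "('a \<times> 'a) set \<Rightarrow> 'a \<times> real \<Rightarrow> 'a \<times> real \<Rightarrow> bool" where
  "lex_less r xu yv \<longleftrightarrow> (fst xu, fst yv) \<in> r \<or> (fst xu = fst yv \<and> snd xu < snd yv)"

definition unif01 :: "real measure" where
  "unif01 = uniform_measure lborel {0..1}"

text \<open>Joint law of (X, Y, U1, U0): X ~ p, Y ~ q, U1, U0 ~ Unif(0,1), all independent.\<close>
definition pair_space :: "'a pmf \<Rightarrow> 'a pmf \<Rightarrow> (('a \<times> 'a) \<times> (real \<times> real)) measure" where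
  "pair_space p q = (measure_pmf p \<Otimes>\<^sub>M measure_pmf q) \<Otimes>\<^sub>M (unif01 \<Otimes>\<^sub>M unif01)"

definition rank_space :: "'a pmf \<Rightarrow> 'a pmf \<Rightarrow> nat \<Rightarrow> ((nat \<Rightarrow> 'a) \<times> (nat \<Rightarrow> real)) measure" where
  "rank_space p q m =
     (PiM {0..m} (\<lambda>j. if j = 0 then measure_pmf q else measure_pmf p)) \<Otimes>\<^sub>M
     (PiM {0..m} (\<lambda>_. unif01))"

definition rank_stat :: "('a \<times> 'a) set \<Rightarrow> nat \<Rightarrow> (nat \<Rightarrow> 'a) \<times> (nat \<Rightarrow> real) \<Rightarrow> nat" where
  "rank_stat r m \<omega> = (\<Sum>j\<in>{1..m}.
      (if (fst \<omega> j, fst \<omega> 0) \<in> r then 1 else 0) +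
      (if fst \<omega> j = fst \<omega> 0 \<and> snd \<omega> j < snd \<omega> 0 then 1 else 0))"

end

theory Submission
  imports Defs
begin

text \<open>The j-th summand of R is the indicator of the event (X_j, U_j) \<lhd> (X_0, U_0); irreflexivity
  of \<prec> makes its two terms disjoint. By independence, each of these m events has probability
  P = Pr[(X, U_1) \<lhd> (Y, U_0)], so E[R] = m P by linearity of expectation. A uniform R on
  {0, ..., m} has mean m/2, hence uniformity would force P = 1/2.\<close>

lemma distr_PiM_two_components:
  assumes "finite I" "i \<in> I" "j \<in> I" "i \<noteq> j" and M: "\<And>k. k \<in> I \<Longrightarrow> prob_space (M k)"
  shows "distr (PiM I M) (M i \<Otimes>\<^sub>M M j) (\<lambda>x. (x i, x j)) = M i \<Otimes>\<^sub>M M j"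
proof -
  interpret N: prob_space "PiM I M" by (rule prob_space_PiM) (rule M)
  have "distr (PiM I M) (PiM I M) (\<lambda>x. \<lambda>k\<in>I. x k) = distr (PiM I M) (PiM I M) (\<lambda>x. x)"
    by (rule distr_cong) (auto simp: space_PiM PiE_def extensional_def)
  also have "\<dots> = PiM I (\<lambda>k. distr (PiM I M) (M k) (\<lambda>x. x k))"
    by (auto simp: distr_PiM_component M intro!: PiM_cong)
  finally have "N.indep_vars M (\<lambda>k x. x k) I"
    using assms by (subst N.indep_vars_iff_distr_eq_PiM') auto
  then have "N.indep_var (PiM {i} M) (\<lambda>x. restrict x {i}) (PiM {j} M) (\<lambda>x. restrict x {j})"
    using assms by (intro N.indep_var_restrict) auto
  then have "N.indep_var (M i) ((\<lambda>f. f i) \<circ> (\<lambda>x. restrict x {i})) (M j) ((\<lambda>f. f j) \<circ> (\<lambda>x. restrict x {j}))"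
    by (rule N.indep_var_compose) auto
  then have "N.indep_var (M i) (\<lambda>x. x i) (M j) (\<lambda>x. x j)"
    by (simp add: comp_def)
  then show ?thesis
    using assms by (simp add: N.indep_var_distribution_eq distr_PiM_component M)
qed

lemma measurable_PiM_two_components:
  assumes "i \<in> I" "j \<in> I"
  shows "(\<lambda>x. (x i, x j)) \<in> PiM I M \<rightarrow>\<^sub>M M i \<Otimes>\<^sub>M M j"
  using assms by (intro measurable_Pair measurable_component_singleton)

lemma real_card_filter_eq_sum_indicator:
  assumes "finite J"
  shows "real (card {j\<in>J. x \<in> A j}) = (\<Sum>j\<in>J. indicator (A j) x)"
  using assms by (simp add: indicator_def sum.If_cases Int_def)

lemma (in prob_space) expectation_card_events:
  assumes "finite J" and "\<And>j. j \<in> J \<Longrightarrow> A j \<in> events"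
  shows "expectation (\<lambda>x. real (card {j\<in>J. x \<in> A j})) = (\<Sum>j\<in>J. prob (A j))"
  using assms by (simp add: real_card_filter_eq_sum_indicator less_top[symmetric])

lemma (in prob_space) expectation_uniform_atLeastAtMost:
  fixes f :: "'a \<Rightarrow> nat"
  assumes f: "(\<lambda>x. real (f x)) \<in> borel_measurable M"
    and bounded: "\<And>x. x \<in> space M \<Longrightarrow> f x \<le> n"
    and uniform: "\<And>k. k \<le> n \<Longrightarrow> prob {x \<in> space M. f x = k} = 1 / real (n + 1)"
  shows "expectation (\<lambda>x. real (f x)) = real n / 2"
proof -
  have level_sets: "{x \<in> space M. f x = k} \<in> events" for k
  proof -
    have "{x \<in> space M. real (f x) = real k} \<in> events"
      using f by measurable
    then show ?thesis by simp
  qed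
  have "expectation (\<lambda>x. real (f x)) =
      expectation (\<lambda>x. \<Sum>k\<in>{0..n}. real k * indicator {x \<in> space M. f x = k} x)"
    using bounded by (intro Bochner_Integration.integral_cong) (auto simp: indicator_def sum.delta)
  also have "\<dots> = (\<Sum>k\<in>{0..n}. real k * prob {x \<in> space M. f x = k})"
    using level_sets by (subst Bochner_Integration.integral_sum) (auto simp: less_top[symmetric])
  also have "\<dots> = (\<Sum>k\<in>{0..n}. real k) / real (n + 1)"
    using uniform by (simp add: sum_divide_distrib)
  also have "\<dots> = real n / 2"
    using double_gauss_sum[of n, where ?'a = real] by (simp add: field_simps)
  finally show ?thesis .
qed

lemma prob_space_unif01: "prob_space unif01"
  unfolding unif01_def by (rule prob_space_uniform_measure) auto

lemma space_unif01 [simp]: "space unif01 = UNIV"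
  unfolding unif01_def by simp

lemma prob_space_rank_space: "prob_space (rank_space p q m)"
  unfolding rank_space_def
  by (intro prob_space_pair prob_space_PiM) (auto simp: prob_space_measure_pmf prob_space_unif01)

lemma space_pair_space [simp]: "space (pair_space p q) = UNIV"
  by (simp add: pair_space_def space_pair_measure)

lemma sets_pair_space:
  fixes p q :: "'a::countable pmf"
  shows "sets (pair_space p q) = sets (count_space UNIV \<Otimes>\<^sub>M (borel :: (real \<times> real) measure))"
proof -
  have "sets (measure_pmf p \<Otimes>\<^sub>M measure_pmf q) = sets (count_space (UNIV :: 'a set) \<Otimes>\<^sub>M count_space (UNIV :: 'a set))"
    by (rule sets_pair_measure_cong) (simp_all add: sets_measure_pmf_count_space)
  also have "count_space (UNIV :: 'a set) \<Otimes>\<^sub>M count_space (UNIV :: 'a set) = count_space (UNIV \<times> UNIV)"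
    by (rule pair_measure_countable) auto
  finally have discrete: "sets (measure_pmf p \<Otimes>\<^sub>M measure_pmf q) = sets (count_space UNIV)"
    by simp
  have "sets (unif01 \<Otimes>\<^sub>M unif01) = sets (borel :: (real \<times> real) measure)"
    unfolding unif01_def by (subst borel_prod[symmetric]) (auto intro!: sets_pair_measure_cong)
  then show ?thesis
    unfolding pair_space_def using discrete by (rule sets_pair_measure_cong[rotated])
qed

lemma lex_event_in_sets_pair_space:
  fixes p q :: "'a::countable pmf"
  shows "{\<omega> \<in> space (pair_space p q).
           lex_less r (fst (fst \<omega>), fst (snd \<omega>)) (snd (fst \<omega>), snd (snd \<omega>))} \<in> sets (pair_space p q)"
proof -
  have "{\<omega> \<in> space (pair_space p q).
           lex_less r (fst (fst \<omega>), fst (snd \<omega>)) (snd (fst \<omega>), snd (snd \<omega>))}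
      = r \<times> UNIV \<union> Id \<times> {u :: real \<times> real. fst u < snd u}"
    by (auto simp: lex_less_def)
  moreover have "open {u :: real \<times> real. fst u < snd u}"
    by (intro open_Collect_less continuous_intros)
  ultimately show ?thesis
    unfolding sets_pair_space by (auto intro!: sets.Un pair_measureI borel_open)
qed

definition pair_with_reference :: "nat \<Rightarrow> (nat \<Rightarrow> 'a) \<times> (nat \<Rightarrow> real) \<Rightarrow> ('a \<times> 'a) \<times> (real \<times> real)" where
  "pair_with_reference j \<omega> = ((fst \<omega> j, fst \<omega> 0), (snd \<omega> j, snd \<omega> 0))"

lemma pair_with_reference_split:
  "pair_with_reference j = (\<lambda>(x, u). ((x j, x 0), (u j, u 0)))"
  by (auto simp: pair_with_reference_def)

lemma
  fixes p q :: "'a pmf"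
  assumes "j \<in> {1..m}"
  shows measurable_pair_with_reference: "pair_with_reference j \<in> rank_space p q m \<rightarrow>\<^sub>M pair_space p q"
    and distr_pair_with_reference: "distr (rank_space p q m) (pair_space p q) (pair_with_reference j) = pair_space p q"
proof -
  let ?X = "\<lambda>k. if k = 0 then measure_pmf q else measure_pmf p"
  have j: "j \<in> {0..m}" "0 \<in> {0..m}" "j \<noteq> 0"
    using assms by auto
  have X: "(\<lambda>x. (x j, x 0)) \<in> PiM {0..m} ?X \<rightarrow>\<^sub>M measure_pmf p \<Otimes>\<^sub>M measure_pmf q"
    using measurable_PiM_two_components[OF j(1,2), of ?X] j(3) by (simp del: measurable_pmf_measure2)
  have U: "(\<lambda>u. (u j, u 0)) \<in> PiM {0..m} (\<lambda>_. unif01) \<rightarrow>\<^sub>M unif01 \<Otimes>\<^sub>M unif01"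
    using measurable_PiM_two_components[OF j(1,2)] .
  show "pair_with_reference j \<in> rank_space p q m \<rightarrow>\<^sub>M pair_space p q"
    unfolding pair_with_reference_split rank_space_def pair_space_def
    using X U by measurable
  have dX: "distr (PiM {0..m} ?X) (measure_pmf p \<Otimes>\<^sub>M measure_pmf q) (\<lambda>x. (x j, x 0))
      = measure_pmf p \<Otimes>\<^sub>M measure_pmf q"
    using distr_PiM_two_components[of "{0..m}" j 0 ?X] j by (auto simp: prob_space_measure_pmf)
  have dU: "distr (PiM {0..m} (\<lambda>_. unif01)) (unif01 \<Otimes>\<^sub>M unif01) (\<lambda>u. (u j, u 0))
      = unif01 \<Otimes>\<^sub>M unif01"
    using distr_PiM_two_components[of "{0..m}" j 0 "\<lambda>_. unif01"] j by (auto simp: prob_space_unif01)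
  have "sigma_finite_measure (distr (PiM {0..m} (\<lambda>_. unif01)) (unif01 \<Otimes>\<^sub>M unif01) (\<lambda>u. (u j, u 0)))"
    unfolding dU by (intro prob_space_imp_sigma_finite prob_space_pair prob_space_unif01)
  from pair_measure_distr[OF X U this]
  show "distr (rank_space p q m) (pair_space p q) (pair_with_reference j) = pair_space p q"
    unfolding pair_with_reference_split rank_space_def pair_space_def
    using dX dU by simp
qed

lemma rank_stat_eq_card:
  assumes "irrefl r"
  shows "rank_stat r m \<omega> = card {j \<in> {1..m}. lex_less r (fst \<omega> j, snd \<omega> j) (fst \<omega> 0, snd \<omega> 0)}"
proof -
  have "rank_stat r m \<omega> = (\<Sum>j\<in>{1..m}. if lex_less r (fst \<omega> j, snd \<omega> j) (fst \<omega> 0, snd \<omega> 0) then 1 else 0)"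
    unfolding rank_stat_def using assms by (intro sum.cong) (auto simp: lex_less_def irrefl_def)
  then show ?thesis
    by (simp add: sum.If_cases Int_def)
qed

lemma lex_less_reference_eq_vimage:
  "{\<omega> \<in> space (rank_space p q m). lex_less r (fst \<omega> j, snd \<omega> j) (fst \<omega> 0, snd \<omega> 0)}
   = pair_with_reference j -`
       {\<omega> \<in> space (pair_space p q).
          lex_less r (fst (fst \<omega>), fst (snd \<omega>)) (snd (fst \<omega>), snd (snd \<omega>))}
     \<inter> space (rank_space p q m)"
  by (auto simp: pair_with_reference_def)

lemma prob_lex_less_reference:
  fixes p q :: "'a::countable pmf"
  assumes "j \<in> {1..m}"
  shows "measure (rank_space p q m)
           {\<omega> \<in> space (rank_space p q m). lex_less r (fst \<omega> j, snd \<omega> j) (fst \<omega> 0, snd \<omega> 0)}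
       = measure (pair_space p q)
           {\<omega> \<in> space (pair_space p q).
              lex_less r (fst (fst \<omega>), fst (snd \<omega>)) (snd (fst \<omega>), snd (snd \<omega>))}"
    (is "_ = measure _ ?E")
proof -
  have "measure (rank_space p q m)
           {\<omega> \<in> space (rank_space p q m). lex_less r (fst \<omega> j, snd \<omega> j) (fst \<omega> 0, snd \<omega> 0)}
      = measure (rank_space p q m) (pair_with_reference j -` ?E \<inter> space (rank_space p q m))"
    by (simp only: lex_less_reference_eq_vimage)
  also have "\<dots> = measure (distr (rank_space p q m) (pair_space p q) (pair_with_reference j)) ?E"
    by (rule measure_distr[OF measurable_pair_with_reference[OF assms] lex_event_in_sets_pair_space, symmetric])
  finally show ?thesis
    by (simp only: distr_pair_with_reference[OF assms])
qed

lemma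
  fixes p q :: "'a::countable pmf"
  assumes "irrefl r"
  shows borel_measurable_rank_stat: "(\<lambda>\<omega>. real (rank_stat r m \<omega>)) \<in> borel_measurable (rank_space p q m)"
    and expectation_rank_stat: "integral\<^sup>L (rank_space p q m) (\<lambda>\<omega>. real (rank_stat r m \<omega>))
      = real m * measure (pair_space p q)
           {\<omega> \<in> space (pair_space p q).
              lex_less r (fst (fst \<omega>), fst (snd \<omega>)) (snd (fst \<omega>), snd (snd \<omega>))}"
proof -
  interpret prob_space "rank_space p q m"
    by (rule prob_space_rank_space)
  define A where "A j = {\<omega> \<in> space (rank_space p q m). lex_less r (fst \<omega> j, snd \<omega> j) (fst \<omega> 0, snd \<omega> 0)}" for j
  have A: "A j \<in> events" if "j \<in> {1..m}" for j
    unfolding A_def lex_less_reference_eq_vimage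
    by (rule measurable_sets[OF measurable_pair_with_reference[OF that] lex_event_in_sets_pair_space])
  have rank: "real (rank_stat r m \<omega>) = real (card {j \<in> {1..m}. \<omega> \<in> A j})" if "\<omega> \<in> space (rank_space p q m)" for \<omega>
    using that by (simp add: rank_stat_eq_card[OF assms] A_def)
  show "(\<lambda>\<omega>. real (rank_stat r m \<omega>)) \<in> borel_measurable (rank_space p q m)"
    using A by (simp add: rank real_card_filter_eq_sum_indicator cong: measurable_cong)
  have "expectation (\<lambda>\<omega>. real (rank_stat r m \<omega>)) = expectation (\<lambda>\<omega>. real (card {j \<in> {1..m}. \<omega> \<in> A j}))"
    by (intro Bochner_Integration.integral_cong) (simp_all add: rank)
  also have "\<dots> = (\<Sum>j\<in>{1..m}. prob (A j))"
    by (rule expectation_card_events) (simp_all add: A)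
  finally show "expectation (\<lambda>\<omega>. real (rank_stat r m \<omega>)) = real m * measure (pair_space p q)
           {\<omega> \<in> space (pair_space p q).
              lex_less r (fst (fst \<omega>), fst (snd \<omega>)) (snd (fst \<omega>), snd (snd \<omega>))}"
    by (simp add: A_def prob_lex_less_reference)
qed

theorem corollary3p5:
  fixes r :: "('a::countable \<times> 'a) set" and p q :: "'a pmf"
  assumes "strict_linear_order r"
    and "measure (pair_space p q)
           {\<omega> \<in> space (pair_space p q).
              lex_less r (fst (fst \<omega>), fst (snd \<omega>)) (snd (fst \<omega>), snd (snd \<omega>))} \<noteq> 1/2"
  shows "\<forall>m::nat \<ge> 1. \<not> (\<forall>k\<in>{0..m}.
           measure (rank_space p q m) {\<omega> \<in> space (rank_space p q m). rank_stat r m \<omega> = k}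
             = 1 / real (m + 1))"
proof (intro allI impI notI)
  fix m :: nat
  assume "m \<ge> 1" and uniform: "\<forall>k\<in>{0..m}.
    measure (rank_space p q m) {\<omega> \<in> space (rank_space p q m). rank_stat r m \<omega> = k} = 1 / real (m + 1)"
  interpret prob_space "rank_space p q m"
    by (rule prob_space_rank_space)
  have irrefl: "irrefl r"
    using assms(1) by (simp add: strict_linear_order_on_def)
  have "rank_stat r m \<omega> \<le> card {1..m}" for \<omega>
    unfolding rank_stat_eq_card[OF irrefl] by (rule card_mono) auto
  then have "expectation (\<lambda>\<omega>. real (rank_stat r m \<omega>)) = real m / 2"
    using uniform by (intro expectation_uniform_atLeastAtMost borel_measurable_rank_stat irrefl) simp_all
  then show False
    using expectation_rank_stat[OF irrefl, of p q m] assms(2) \<open>m \<ge> 1\<close> by simp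
qed

end
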